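(* Consider the system of ordinary differential equations \[ \begin{aligned} \frac{dr_a}{dt} &= m_a\frac{(p_a/\theta_{aa})^{n_{aa}}}{1+(p_a/\theta_{aa})^{n_{aa}}+(p_b/\theta_b)^{n_b}}-\gamma_a r_a+A_1,\\ \frac{dr_b}{dt} &= \frac{m_b}{1+(p_a/\theta_a)^{n_a}}-\gamma_b r_b+B_1,\\ \frac{dp_a}{dt} &= k_a r_a-\delta_a p_a,\qquad \frac{dp_b}{dt} = k_b r_b-\delta_b p_b, \end{aligned} \] where $m_a,m_b,\gamma_a,\gamma_b,k_a,k_b,\delta_a,\delta_b,\theta_a,\theta_b,\theta_{aa}>0$, $A_1,B_1\ge 0$, and $n_a,n_b,n_{aa}$ are positive integers. Let $S^*=(r_a^*,r_b^*,p_a^*,p_b^* )$ be a steady state of this system with $p_a^*>0$, $p_b^*>0$. Set, with $p_a=p_a^*$, $p_b=p_b^*$, \[ X=\frac{m_a n_{aa} p_a^{n_{aa}-1}\theta_b^{n_b}\theta_{aa}^{n_{aa}}(p_b^{n_b}+\theta_b^{n_b})}{(p_a^{n_{aa}}\theta_b^{n_b}+p_b^{n_b}\theta_{aa}^{n_{aa}}+\theta_b^{n_b}\theta_{aa}^{n_{aa}})^2},\quad Y=-\frac{m_a n_b p_a^{n_{aa}}p_b^{n_b-1}\theta_b^{n_b}\theta_{aa}^{n_{aa}}}{(p_a^{n_{aa}}\theta_b^{n_b}+p_b^{n_b}\theta_{aa}^{n_{aa}}+\theta_b^{n_b}\theta_{aa}^{n_{aa}})^2},\quad Z=-\frac{m_b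 n_a p_a^{n_a-1}\theta_a^{n_a}}{(p_a^{n_a}+\theta_a^{n_a})^2}, \] and \[ \begin{aligned} \epsilon_1&=\gamma_a+\gamma_b+\delta_a+\delta_b,\\ \epsilon_2&=\gamma_a\gamma_b+(\gamma_a+\gamma_b)(\delta_a+\delta_b)+\delta_a\delta_b-k_aX,\\ \epsilon_3&=\delta_a\delta_b(\gamma_a+\gamma_b)+(\delta_a+\delta_b)\gamma_a\gamma_b-k_a(\delta_b+\gamma_b)X,\\ \epsilon_4&=\gamma_a\gamma_b\delta_a\delta_b-k_ak_bYZ-k_a\gamma_b\delta_bX. \end{aligned} \] If $\epsilon_1>0$, $\epsilon_3>0$, $\epsilon_4>0$ and $\epsilon_1\epsilon_2\epsilon_3-\epsilon_1^2\epsilon_4-\epsilon_3^2>0$, then $S^*$ is locally asymptotically stable.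
   Context: This models a two-gene network in which gene $a$ is activated by its own protein $p_a$ and repressed by protein $p_b$ (combined via a competitive OR logic), and gene $b$ is repressed by $p_a$; $r_a,r_b$ are mRNA concentrations and $p_a,p_b$ protein concentrations. A steady state is a point where all four right-hand sides vanish. *)

theory Defs
  imports "HOL-Analysis.Analysis"
begin

type_synonym state4 = "real \<times> real \<times> real \<times> real"

definition grn_field ::
  "real \<Rightarrow> real \<Rightarrow> real \<Rightarrow> real \<Rightarrow> real \<Rightarrow> real \<Rightarrow> real \<Rightarrow> real \<Rightarrow>
   real \<Rightarrow> real \<Rightarrow> real \<Rightarrow> real \<Rightarrow> real \<Rightarrow> nat \<Rightarrow> nat \<Rightarrow> nat \<Rightarrow> state4 \<Rightarrow> state4" where
  "grn_field ma mb ga gb ka kb da db tha thb thaa A1 B1 na nb naa =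
     (\<lambda>(ra, rb, pa, pb).
        (ma * (pa / thaa) ^ naa / (1 + (pa / thaa) ^ naa + (pb / thb) ^ nb) - ga * ra + A1,
         mb / (1 + (pa / tha) ^ na) - gb * rb + B1,
         ka * ra - da * pa,
         kb * rb - db * pb))"

definition ode_solution :: "('a::real_normed_vector \<Rightarrow> 'a) \<Rightarrow> 'a \<Rightarrow> (real \<Rightarrow> 'a) \<Rightarrow> bool" where
  "ode_solution f x0 x \<longleftrightarrow> x 0 = x0 \<and>
     (\<forall>t\<ge>0. (x has_vector_derivative f (x t)) (at t within {0..}))"

definition lyapunov_stable :: "('a::real_normed_vector \<Rightarrow> 'a) \<Rightarrow> 'a \<Rightarrow> bool" where
  "lyapunov_stable f S \<longleftrightarrow>
     (\<forall>\<epsilon>>0. \<exists>\<delta>>0. \<forall>x0. dist x0 S < \<delta> \<longrightarrow>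
        (\<exists>x. ode_solution f x0 x) \<and>
        (\<forall>x. ode_solution f x0 x \<longrightarrow> (\<forall>t\<ge>0. dist (x t) S < \<epsilon>)))"

definition locally_asymptotically_stable :: "('a::real_normed_vector \<Rightarrow> 'a) \<Rightarrow> 'a \<Rightarrow> bool" where
  "locally_asymptotically_stable f S \<longleftrightarrow>
     lyapunov_stable f S \<and>
     (\<exists>\<eta>>0. \<forall>x0. dist x0 S < \<eta> \<longrightarrow>
        (\<forall>x. ode_solution f x0 x \<longrightarrow> (x \<longlongrightarrow> S) at_top))"

end

theory Submission
  imports Defs
begin

(* At a steady state S the Jacobian J of the field has characteristic polynomial
   x^4 + e1 x^3 + e2 x^2 + e3 x + e4, and the hypotheses are exactly the Routh-Hurwitz conditions
   for it.  Being open, they persist for J + sigma I with a small sigma > 0.  For a linear map M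
   satisfying a Hurwitz quartic, the factorization q2 = b2 + b3 + b4, q3 = q1 (b3 + b4),
   q4 = b2 b4 yields a positive definite quadratic form in y, My, M^2 y, M^3 y that does not
   increase along y' = My.  Taking M = J + sigma I, this form decays at rate 2 sigma along y' = Jy,
   and since the field is J (x - S) + o(|x - S|), it is a strict Lyapunov function near S, which
   gives exponential and hence local asymptotic stability. *)

section \<open>Global solutions of globally Lipschitz systems\<close>

lemma has_integral_power_atLeastAtMost_0:
  assumes "0 \<le> t"
  shows "((\<lambda>s::real. s ^ k) has_integral t ^ Suc k / Suc k) {0..t}"
proof -
  have "((\<lambda>s. s ^ Suc k / Suc k) has_real_derivative s ^ k) (at s within {0..t})" for s :: real
    by (intro derivative_eq_intros) auto
  then have "((\<lambda>s::real. s ^ k) has_integral t ^ Suc k / Suc k - 0 ^ Suc k / Suc k) {0..t}"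
    using assms by (intro fundamental_theorem_of_calculus)
      (auto simp flip: has_real_derivative_iff_has_vector_derivative)
  then show ?thesis by simp
qed

primrec picard_iterate :: "('a::euclidean_space \<Rightarrow> 'a) \<Rightarrow> 'a \<Rightarrow> nat \<Rightarrow> real \<Rightarrow> 'a" where
  "picard_iterate F x0 0 = (\<lambda>t. x0)"
| "picard_iterate F x0 (Suc n) = (\<lambda>t. x0 + integral {0..t} (\<lambda>s. F (picard_iterate F x0 n s)))"

locale picard_iteration =
  fixes F :: "'a::euclidean_space \<Rightarrow> 'a" and L :: real and x0 :: 'a
  assumes lipschitz: "L-lipschitz_on UNIV F"
begin

abbreviation "P \<equiv> picard_iterate F x0"

lemma L_nonneg: "0 \<le> L"
  using lipschitz by (rule lipschitz_on_nonneg)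

lemma norm_F_diff_le: "norm (F u - F v) \<le> L * norm (u - v)"
  using lipschitz_onD[OF lipschitz] by (simp add: dist_norm)

lemma continuous_on_F: "continuous_on S F"
  using lipschitz_on_continuous_on[OF lipschitz] continuous_on_subset by blast

lemma continuous_on_picard: "continuous_on {0..T} (P n)"
proof (induction n arbitrary: T)
  case (Suc n)
  have "continuous_on {0..T} (\<lambda>s. F (P n s))"
    by (rule continuous_on_compose2[OF continuous_on_F Suc]) auto
  then have "continuous_on {0..T} (\<lambda>t. integral {0..t} (\<lambda>s. F (P n s)))"
    by (intro indefinite_integral_continuous_1 integrable_continuous_real)
  then show ?case by (auto intro!: continuous_intros)
qed simp

lemma integrable_F_picard: "(\<lambda>s. F (P n s)) integrable_on {0..T}"
  by (intro integrable_continuous_real continuous_on_compose2[OF continuous_on_F continuous_on_picard])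
    auto

lemma norm_picard_Suc_diff_le:
  assumes "0 \<le> t"
  shows "norm (P (Suc n) t - P n t) \<le> norm (F x0) * L ^ n * t ^ Suc n / fact (Suc n)"
  using assms
proof (induction n arbitrary: t)
  case (Suc n)
  define C where "C = L * norm (F x0) * L ^ n / fact (Suc n)"
  have "P (Suc (Suc n)) t - P (Suc n) t = integral {0..t} (\<lambda>s. F (P (Suc n) s) - F (P n s))"
    by (subst integral_diff[OF integrable_F_picard integrable_F_picard]) simp
  also have "norm \<dots> \<le> integral {0..t} (\<lambda>s. C * s ^ Suc n)"
  proof (rule integral_norm_bound_integral)
    show "(\<lambda>s. F (P (Suc n) s) - F (P n s)) integrable_on {0..t}"
      by (rule integrable_diff[OF integrable_F_picard integrable_F_picard])
    fix s assume s: "s \<in> {0..t}"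
    have "norm (F (P (Suc n) s) - F (P n s)) \<le> L * norm (P (Suc n) s - P n s)"
      by (rule norm_F_diff_le)
    also have "\<dots> \<le> C * s ^ Suc n"
      using mult_left_mono[OF Suc.IH L_nonneg, of s] s by (simp add: C_def)
    finally show "norm (F (P (Suc n) s) - F (P n s)) \<le> C * s ^ Suc n" .
  qed (auto intro!: integrable_continuous_real continuous_intros)
  also have "\<dots> = C * t ^ Suc (Suc n) / Suc (Suc n)"
    using integral_unique[OF has_integral_mult_right[OF has_integral_power_atLeastAtMost_0[OF Suc.prems]]]
    by (rule trans) simp
  also have "\<dots> = norm (F x0) * L ^ Suc n * t ^ Suc (Suc n) / fact (Suc (Suc n))"
    by (simp add: C_def field_simps)
  finally show ?case .
qed simp

definition picard_limit :: "real \<Rightarrow> 'a" where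
  "picard_limit t = x0 + (\<Sum>n. P (Suc n) t - P n t)"

lemma uniform_limit_picard:
  assumes "0 \<le> T"
  shows "uniform_limit {0..T} P picard_limit sequentially"
proof -
  define B where "B n = norm (F x0) * L ^ n * T ^ Suc n / fact (Suc n)" for n
  have "summable B"
  proof (rule summable_comparison_test')
    show "summable (\<lambda>n. (norm (F x0) * T) * (inverse (fact n) * (L * T) ^ n))"
      by (intro summable_mult summable_exp)
    fix n
    have "B n \<le> norm (F x0) * L ^ n * T ^ Suc n / fact n"
      unfolding B_def using assms L_nonneg
      by (intro divide_left_mono) (auto intro: fact_mono)
    then show "norm (B n) \<le> (norm (F x0) * T) * (inverse (fact n) * (L * T) ^ n)"
      using assms L_nonneg by (simp add: B_def power_mult_distrib field_simps)
  qed
  then have "uniform_limit {0..T} (\<lambda>n t. \<Sum>i<n. P (Suc i) t - P i t)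
      (\<lambda>t. \<Sum>i. P (Suc i) t - P i t) sequentially"
  proof (rule Weierstrass_m_test[rotated])
    fix n t assume t: "t \<in> {0..T}"
    have "norm (P (Suc n) t - P n t) \<le> norm (F x0) * L ^ n * t ^ Suc n / fact (Suc n)"
      using t by (intro norm_picard_Suc_diff_le) auto
    also have "\<dots> \<le> B n"
      unfolding B_def using t L_nonneg
      by (intro divide_right_mono mult_left_mono power_mono) auto
    finally show "norm (P (Suc n) t - P n t) \<le> B n" .
  qed
  then have "uniform_limit {0..T} (\<lambda>n t. x0 + (\<Sum>i<n. P (Suc i) t - P i t)) picard_limit
      sequentially"
    unfolding picard_limit_def by (intro uniform_limit_intros)
  moreover have "x0 + (\<Sum>i<n. P (Suc i) t - P i t) = P n t" for n t
    using sum_lessThan_telescope[of "\<lambda>i. P i t" n] by simp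
  ultimately show ?thesis by simp
qed

lemma continuous_on_picard_limit:
  assumes "0 \<le> T"
  shows "continuous_on {0..T} picard_limit"
  by (rule uniform_limit_theorem[OF _ uniform_limit_picard[OF assms]])
    (auto intro!: always_eventually continuous_on_picard)

lemma picard_limit_integral_equation:
  assumes "0 \<le> t"
  shows "picard_limit t = x0 + integral {0..t} (\<lambda>s. F (picard_limit s))"
proof -
  have "uniform_limit {0..t} (\<lambda>n s. F (P n s)) (\<lambda>s. F (picard_limit s)) sequentially"
    by (rule uniform_limit_compose_uniformly_continuous_on[OF uniform_limit_picard[OF assms]
          lipschitz_on_uniformly_continuous[OF lipschitz]]) auto
  then obtain I J where I: "\<And>n. ((\<lambda>s. F (P n s)) has_integral I n) {0..t}"
    and J: "((\<lambda>s. F (picard_limit s)) has_integral J) {0..t}" and IJ: "I \<longlonglongrightarrow> J"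
    by (rule uniform_limit_integral)
       (auto intro: continuous_on_compose2[OF continuous_on_F continuous_on_picard])
  have "(\<lambda>n. P (Suc n) t) \<longlonglongrightarrow> x0 + J"
    using tendsto_add[OF tendsto_const IJ] by (simp add: integral_unique[OF I])
  moreover have "(\<lambda>n. P (Suc n) t) \<longlonglongrightarrow> picard_limit t"
    using tendsto_uniform_limitI[OF uniform_limit_picard[OF assms], of t] assms
    by (intro LIMSEQ_Suc) auto
  ultimately show ?thesis
    using LIMSEQ_unique integral_unique[OF J] by metis
qed

lemma ode_solution_picard_limit:
  "ode_solution F x0 (\<lambda>t. x0 + integral {0..t} (\<lambda>s. F (picard_limit s)))"
  unfolding ode_solution_def
proof (intro conjI allI impI)
  fix t :: real assume t: "0 \<le> t"
  define I where "I u = integral {0..u} (\<lambda>s. F (picard_limit s))" for u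
  have "(I has_vector_derivative F (picard_limit t)) (at t within {0..t+1})"
    unfolding I_def using t
    by (intro integral_has_vector_derivative
        continuous_on_compose2[OF continuous_on_F continuous_on_picard_limit[of "t + 1"]]) auto
  moreover have "at t within {0..t+1} = at t within {0..}"
    by (rule at_within_nhd[of _ "{..<t+1}"]) auto
  ultimately have "((\<lambda>u. x0 + I u) has_vector_derivative F (picard_limit t)) (at t within {0..})"
    by (auto intro!: derivative_eq_intros)
  then show "((\<lambda>u. x0 + I u) has_vector_derivative F (x0 + I t)) (at t within {0..})"
    by (simp add: I_def flip: picard_limit_integral_equation[OF t])
qed simp

end

lemma lipschitz_ode_solution_exists:
  fixes F :: "'a::euclidean_space \<Rightarrow> 'a"
  assumes "L-lipschitz_on UNIV F"
  shows "\<exists>x. ode_solution F x0 x"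
  using picard_iteration.ode_solution_picard_limit[OF picard_iteration.intro[OF assms]] by blast

section \<open>Quadratic Lyapunov functions and exponential stability\<close>

lemma lyapunov_weighted_nonincreasing:
  fixes G :: "'a::real_normed_vector \<Rightarrow> 'a" and V :: "'a \<Rightarrow> real"
  assumes V_deriv: "\<And>y. (V has_derivative DV y) (at y)"
    and decrease: "\<And>z. z \<in> ball S \<rho> \<Longrightarrow> DV (z - S) (G z) \<le> - c * V (z - S)"
    and sol: "ode_solution G x0 x"
    and T: "0 \<le> T" and inside: "\<And>s. 0 \<le> s \<Longrightarrow> s < T \<Longrightarrow> x s \<in> ball S \<rho>"
  shows "V (x T - S) * exp (c * T) \<le> V (x0 - S)"
proof -
  define \<phi> where "\<phi> t = V (x t - S) * exp (c * t)" for t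
  define \<phi>' where "\<phi>' t = (DV (x t - S) (G (x t)) + c * V (x t - S)) * exp (c * t)" for t
  have x_deriv: "(x has_vector_derivative G (x t)) (at t within {0..})" if "0 \<le> t" for t
    using sol that by (simp add: ode_solution_def)
  have \<phi>_deriv: "(\<phi> has_real_derivative \<phi>' t) (at t within {0..})" if t: "0 \<le> t" for t
  proof -
    have "((\<lambda>t. V (x t - S)) has_derivative (\<lambda>h. DV (x t - S) (h *\<^sub>R G (x t)))) (at t within {0..})"
      by (rule has_derivative_compose[OF _ V_deriv])
        (use x_deriv[OF t] in \<open>auto intro!: derivative_eq_intros simp: has_vector_derivative_def\<close>)
    moreover have "linear (DV (x t - S))"
      using V_deriv has_derivative_linear by blast
    ultimately have "((\<lambda>t. V (x t - S)) has_real_derivative DV (x t - S) (G (x t)))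
        (at t within {0..})"
      by (simp add: has_field_derivative_def linear.scaleR
          mult.commute[of _ "DV (x t - S) (G (x t))"])
    then show ?thesis
      unfolding \<phi>_def \<phi>'_def by (auto intro!: derivative_eq_intros simp: algebra_simps)
  qed
  have "continuous_on {0..} \<phi>"
    unfolding continuous_on_eq_continuous_within using \<phi>_deriv DERIV_continuous by fastforce
  then have \<phi>_cont: "continuous_on {0..T} \<phi>"
    by (rule continuous_on_subset) auto
  have \<phi>_deriv_nonpos: "\<exists>y. (\<phi> has_real_derivative y) (at s) \<and> y \<le> 0" if "0 < s" "s < T" for s
  proof (intro exI conjI)
    have "at s within {0..} = at s"
      by (rule at_within_interior) (use that in simp)
    moreover have "(\<phi> has_real_derivative \<phi>' s) (at s within {0..})"
      using \<phi>_deriv that by simp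
    ultimately show "(\<phi> has_real_derivative \<phi>' s) (at s)"
      by (simp only:)
    have "DV (x s - S) (G (x s)) + c * V (x s - S) \<le> 0"
      using decrease[OF inside[of s]] that by simp
    then show "\<phi>' s \<le> 0"
      by (simp add: \<phi>'_def mult_nonpos_nonneg)
  qed
  have "\<phi> T \<le> \<phi> 0"
    by (rule DERIV_nonpos_imp_decreasing_open[OF T \<phi>_deriv_nonpos \<phi>_cont])
  then show ?thesis
    using sol by (simp add: \<phi>_def ode_solution_def)
qed

lemma lyapunov_exponential_decay:
  fixes G :: "'a::real_normed_vector \<Rightarrow> 'a" and V :: "'a \<Rightarrow> real"
  assumes a: "0 < a" and c: "0 \<le> c" and \<rho>: "0 \<le> \<rho>"
    and V_lower: "\<And>y. a * (norm y)\<^sup>2 \<le> V y"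
    and V_deriv: "\<And>y. (V has_derivative DV y) (at y)"
    and decrease: "\<And>z. z \<in> ball S \<rho> \<Longrightarrow> DV (z - S) (G z) \<le> - c * V (z - S)"
    and sol: "ode_solution G x0 x"
    and start: "V (x0 - S) < a * \<rho>\<^sup>2"
    and t: "0 \<le> t"
  shows "x t \<in> ball S \<rho>" and "V (x t - S) \<le> V (x0 - S) * exp (- c * t)"
proof -
  note weighted = lyapunov_weighted_nonincreasing[OF V_deriv decrease sol]
  have V_nonneg: "0 \<le> V y" for y
    using a V_lower[of y] by (meson order_trans mult_nonneg_nonneg less_imp_le zero_le_power2)
  have in_ball: "z \<in> ball S \<rho>" if "V (z - S) < a * \<rho>\<^sup>2" for z
  proof -
    have "a * (norm (z - S))\<^sup>2 < a * \<rho>\<^sup>2"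
      using V_lower[of "z - S"] that by linarith
    then have "norm (z - S) < \<rho>"
      using a \<rho> power_less_imp_less_base[of "norm (z - S)" 2 \<rho>] by simp
    then show ?thesis by (simp add: dist_norm norm_minus_commute)
  qed
  have stays: "x s \<in> ball S \<rho>" if "0 \<le> s" for s
  proof (rule ccontr)
    assume "x s \<notin> ball S \<rho>"
    define E where "E = {0..} \<inter> x -` (- ball S \<rho>)"
    have "continuous_on {0..} x"
      using sol has_vector_derivative_continuous
      unfolding ode_solution_def continuous_on_eq_continuous_within by fastforce
    then have "closed E"
      unfolding E_def by (rule continuous_closed_preimage) auto
    moreover have "s \<in> E" and "bdd_below E"
      using \<open>x s \<notin> ball S \<rho>\<close> \<open>0 \<le> s\<close> unfolding E_def by (auto intro: bdd_belowI[of _ 0])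
    ultimately have first_exit: "Inf E \<in> E"
      using closed_contains_Inf by blast
    have "x r \<in> ball S \<rho>" if "0 \<le> r" "r < Inf E" for r
      using cInf_lower[OF _ \<open>bdd_below E\<close>, of r] that unfolding E_def by force
    then have "V (x (Inf E) - S) * exp (c * Inf E) \<le> V (x0 - S)"
      using first_exit by (intro weighted) (auto simp: E_def)
    moreover have "V (x (Inf E) - S) \<le> V (x (Inf E) - S) * exp (c * Inf E)"
      using mult_left_mono[OF _ V_nonneg, of 1 "exp (c * Inf E)"] c first_exit
      by (simp add: E_def)
    ultimately have "x (Inf E) \<in> ball S \<rho>"
      using start by (intro in_ball) linarith
    with first_exit show False
      unfolding E_def by auto
  qed
  then show "x t \<in> ball S \<rho>"
    using t .
  have "V (x t - S) * exp (c * t) \<le> V (x0 - S)"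
    using t stays by (intro weighted) auto
  then have "V (x t - S) * exp (c * t) * exp (- c * t) \<le> V (x0 - S) * exp (- c * t)"
    by (simp add: mult_right_mono)
  then show "V (x t - S) \<le> V (x0 - S) * exp (- c * t)"
    by (simp add: mult.assoc flip: exp_add)
qed

definition exponentially_stable :: "('a::real_normed_vector \<Rightarrow> 'a) \<Rightarrow> 'a \<Rightarrow> bool" where
  "exponentially_stable f S \<longleftrightarrow>
     (\<exists>\<delta>>0. \<exists>C. \<exists>c>0. \<forall>x0. dist x0 S < \<delta> \<longrightarrow>
        (\<exists>x. ode_solution f x0 x) \<and>
        (\<forall>x. ode_solution f x0 x \<longrightarrow> (\<forall>t\<ge>0. dist (x t) S \<le> C * dist x0 S * exp (- c * t))))"

lemma exponentially_stable_imp_locally_asymptotically_stable: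
  assumes "exponentially_stable f S"
  shows "locally_asymptotically_stable f S"
proof -
  obtain \<delta> C c where \<delta>: "0 < \<delta>" and c: "0 < c"
    and exists: "\<And>x0. dist x0 S < \<delta> \<Longrightarrow> \<exists>x. ode_solution f x0 x"
    and bound: "\<And>x0 x t. dist x0 S < \<delta> \<Longrightarrow> ode_solution f x0 x \<Longrightarrow> 0 \<le> t \<Longrightarrow>
                   dist (x t) S \<le> C * dist x0 S * exp (- c * t)"
    using assms unfolding exponentially_stable_def by blast
  have "lyapunov_stable f S"
    unfolding lyapunov_stable_def
  proof (intro allI impI)
    fix \<epsilon> :: real assume \<epsilon>: "0 < \<epsilon>"
    define \<delta>' where "\<delta>' = min \<delta> (\<epsilon> / (\<bar>C\<bar> + 1))"
    have "dist (x t) S < \<epsilon>" if x0: "dist x0 S < \<delta>'" and x: "ode_solution f x0 x" and t: "0 \<le> t"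
      for x0 x t
    proof -
      have "dist (x t) S \<le> C * dist x0 S * exp (- c * t)"
        using bound[OF _ x t] x0 by (simp add: \<delta>'_def)
      also have "\<dots> \<le> \<bar>C\<bar> * dist x0 S * 1"
        using c t by (intro mult_mono mult_right_mono) auto
      also have "\<dots> \<le> (\<bar>C\<bar> + 1) * dist x0 S"
        by (simp add: distrib_right)
      also have "\<dots> < \<epsilon>"
        using x0 by (simp add: \<delta>'_def pos_less_divide_eq mult.commute)
      finally show ?thesis .
    qed
    moreover have "0 < \<delta>'"
      using \<delta> \<epsilon> by (simp add: \<delta>'_def)
    ultimately show "\<exists>\<delta>>0. \<forall>x0. dist x0 S < \<delta> \<longrightarrow> (\<exists>x. ode_solution f x0 x) \<and>
        (\<forall>x. ode_solution f x0 x \<longrightarrow> (\<forall>t\<ge>0. dist (x t) S < \<epsilon>))"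
      using exists by (intro exI[of _ \<delta>']) (auto simp: \<delta>'_def)
  qed
  moreover have "(x \<longlongrightarrow> S) at_top" if x0: "dist x0 S < \<delta>" and x: "ode_solution f x0 x" for x0 x
  proof -
    have decay: "((\<lambda>t. C * dist x0 S * exp (- c * t)) \<longlongrightarrow> 0) at_top"
      using c by (intro tendsto_mult_right_zero filterlim_compose[OF exp_at_bot]
          filterlim_tendsto_neg_mult_at_bot[OF tendsto_const _ filterlim_ident]) auto
    have dominated: "\<forall>\<^sub>F t in at_top. dist (x t) S \<le> C * dist x0 S * exp (- c * t)"
      using bound[OF x0 x] by (intro eventually_at_top_linorderI[of 0]) auto
    have "((\<lambda>t. dist (x t) S) \<longlongrightarrow> 0) at_top"
      by (rule tendsto_sandwich[OF _ dominated tendsto_const decay]) simp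
    then show ?thesis
      by (rule tendsto_dist_iff[THEN iffD2])
  qed
  ultimately show ?thesis
    unfolding locally_asymptotically_stable_def using \<delta> by blast
qed

lemma quadratic_lyapunov_imp_exponentially_stable:
  fixes f :: "'a::euclidean_space \<Rightarrow> 'a" and V :: "'a \<Rightarrow> real"
  assumes a: "0 < a" and b: "0 < b" and c: "0 < c" and \<rho>: "0 < \<rho>"
    and V_lower: "\<And>y. a * (norm y)\<^sup>2 \<le> V y" and V_upper: "\<And>y. V y \<le> b * (norm y)\<^sup>2"
    and V_deriv: "\<And>y. (V has_derivative DV y) (at y)"
    and decrease: "\<And>z. z \<in> ball S \<rho> \<Longrightarrow> DV (z - S) (f z) \<le> - c * V (z - S)"
    and lipschitz: "L-lipschitz_on (cball S \<rho>) f"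
  shows "exponentially_stable f S"
proof -
  (* Retracting onto the ball makes f globally Lipschitz, so Picard iteration yields solutions;
     those starting close to S never leave the ball and therefore solve the original system. *)
  define F where "F = f \<circ> closest_point (cball S \<rho>)"
  have F_eq: "F z = f z" if "z \<in> cball S \<rho>" for z
    using that by (simp add: F_def closest_point_self)
  have "(L * 1)-lipschitz_on UNIV F"
    unfolding F_def
  proof (rule lipschitz_on_compose)
    show "1-lipschitz_on UNIV (closest_point (cball S \<rho>))"
      using \<rho> by (auto intro!: lipschitz_onI closest_point_lipschitz)
    show "L-lipschitz_on (range (closest_point (cball S \<rho>))) f"
      using \<rho> by (intro lipschitz_on_subset[OF lipschitz]) (auto intro: closest_point_in_set)
  qed
  then have "\<exists>x. ode_solution F x0 x" for x0
    by (rule lipschitz_ode_solution_exists)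
  then obtain x\<^sub>F where x\<^sub>F: "\<And>x0. ode_solution F x0 (x\<^sub>F x0)"
    by metis
  define \<delta> where "\<delta> = sqrt (a / b) * \<rho>"
  have start: "V (x0 - S) < a * \<rho>\<^sup>2" if "dist x0 S < \<delta>" for x0
  proof -
    have "b * (norm (x0 - S))\<^sup>2 < b * \<delta>\<^sup>2"
      using that b by (intro mult_strict_left_mono power_strict_mono) (auto simp: dist_norm)
    also have "\<dots> = a * \<rho>\<^sup>2"
      using a b by (simp add: \<delta>_def power_mult_distrib)
    finally show ?thesis
      using V_upper[of "x0 - S"] by linarith
  qed
  note decay = lyapunov_exponential_decay[OF a less_imp_le[OF c] less_imp_le[OF \<rho>] V_lower V_deriv]
  have "\<exists>x. ode_solution f x0 x" if "dist x0 S < \<delta>" for x0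
  proof
    have "DV (z - S) (F z) \<le> - c * V (z - S)" if "z \<in> ball S \<rho>" for z
      using that F_eq decrease by auto
    then have "x\<^sub>F x0 t \<in> ball S \<rho>" if "0 \<le> t" for t
      using decay(1)[OF _ x\<^sub>F start[OF \<open>dist x0 S < \<delta>\<close>] that] by blast
    then have "F (x\<^sub>F x0 t) = f (x\<^sub>F x0 t)" if "0 \<le> t" for t
      using F_eq that by (simp add: less_imp_le)
    then show "ode_solution f x0 (x\<^sub>F x0)"
      using x\<^sub>F[of x0] by (simp add: ode_solution_def)
  qed
  moreover have "dist (x t) S \<le> sqrt (b / a) * dist x0 S * exp (- (c / 2) * t)"
    if x0: "dist x0 S < \<delta>" and x: "ode_solution f x0 x" and t: "0 \<le> t" for x0 x t
  proof (rule power2_le_imp_le)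
    have "a * (dist (x t) S)\<^sup>2 \<le> V (x0 - S) * exp (- c * t)"
      using V_lower[of "x t - S"] decay(2)[OF decrease x start[OF x0] t] by (simp add: dist_norm)
    also have "\<dots> \<le> b * (dist x0 S)\<^sup>2 * exp (- c * t)"
      using V_upper[of "x0 - S"] by (simp add: dist_norm)
    finally show "(dist (x t) S)\<^sup>2 \<le> (sqrt (b / a) * dist x0 S * exp (- (c / 2) * t))\<^sup>2"
      using a b by (simp add: power_mult_distrib field_simps flip: exp_of_nat_mult)
  qed (use a b in simp)
  moreover have "0 < \<delta>" "0 < c / 2"
    using a b c \<rho> by (simp_all add: \<delta>_def)
  ultimately show ?thesis
    unfolding exponentially_stable_def by blast
qed

lemma linearized_exponential_stability:
  fixes f A :: "'a::euclidean_space \<Rightarrow> 'a" and B :: "'a \<Rightarrow> 'a \<Rightarrow> real"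
  assumes equilibrium: "f S = 0" and deriv: "(f has_derivative A) (at S)"
    and r: "0 < r" and lipschitz: "L-lipschitz_on (cball S r) f"
    and B: "bilinear B" and B_sym: "\<And>y h. B y h = B h y"
    and a: "0 < a" and B_lower: "\<And>y. a * (norm y)\<^sup>2 \<le> B y y"
    and c: "0 < c" and B_decrease: "\<And>y. B y (A y) \<le> - c * B y y"
  shows "exponentially_stable f S"
proof -
  interpret B: bounded_bilinear B
    using B by (simp add: bilinear_conv_bounded_bilinear)
  obtain K where K: "0 < K" "\<And>y h. norm (B y h) \<le> norm y * norm h * K"
    using B.pos_bounded by blast
  define \<eta> where "\<eta> = c * a / (2 * K)"
  have "0 < \<eta>"
    using a c K by (simp add: \<eta>_def)
  then obtain d where d: "0 < d"
    and remainder: "\<And>z. norm (z - S) < d \<Longrightarrow> norm (f z - f S - A (z - S)) \<le> \<eta> * norm (z - S)"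
    using deriv unfolding has_derivative_at_alt by blast
  define \<rho> where "\<rho> = min d r"
  have decrease: "2 * B (z - S) (f z) \<le> - c * B (z - S) (z - S)" if "z \<in> ball S \<rho>" for z
  proof -
    define y where "y = z - S"
    define g where "g = f z - A y"
    have "norm g \<le> \<eta> * norm y"
      using remainder[of z] that equilibrium
      by (simp add: g_def y_def \<rho>_def dist_norm norm_minus_commute)
    have "B y g \<le> norm y * norm g * K"
      using K(2)[of y g] by simp
    also have "\<dots> \<le> norm y * (\<eta> * norm y) * K"
      using \<open>norm g \<le> \<eta> * norm y\<close> K by (intro mult_right_mono mult_left_mono) auto
    also have "\<dots> = c / 2 * (a * (norm y)\<^sup>2)"
      using K by (simp add: \<eta>_def power2_eq_square)
    also have "\<dots> \<le> c / 2 * B y y"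
      using c B_lower by (intro mult_left_mono) auto
    finally have "B y g \<le> c / 2 * B y y" .
    moreover have "B y (f z) = B y (A y) + B y g"
      by (simp add: g_def B.diff_right)
    ultimately show ?thesis
      using B_decrease[of y] by (simp add: y_def)
  qed
  have V_deriv: "((\<lambda>y. B y y) has_derivative (\<lambda>h. 2 * B y h)) (at y)" for y
    using B.FDERIV[OF has_derivative_ident has_derivative_ident, of y UNIV] by (simp add: B_sym)
  have V_upper: "B y y \<le> K * (norm y)\<^sup>2" for y
    using abs_le_D1[OF K(2)[of y y, unfolded real_norm_def]] by (simp add: power2_eq_square mult_ac)
  show ?thesis
  proof (rule quadratic_lyapunov_imp_exponentially_stable[OF a K(1) c _ B_lower V_upper V_deriv])
    show "0 < \<rho>"
      using d r by (simp add: \<rho>_def)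
    show "2 * B (z - S) (f z) \<le> - c * B (z - S) (z - S)" if "z \<in> ball S \<rho>" for z
      using decrease that by blast
    show "L-lipschitz_on (cball S \<rho>) f"
      by (rule lipschitz_on_subset[OF lipschitz]) (simp add: \<rho>_def subset_cball)
  qed
qed

section \<open>Quartic Routh--Hurwitz criterion\<close>

definition hurwitz_quartic :: "real \<Rightarrow> real \<Rightarrow> real \<Rightarrow> real \<Rightarrow> bool" where
  "hurwitz_quartic q1 q2 q3 q4 \<longleftrightarrow>
     0 < q1 \<and> 0 < q3 \<and> 0 < q4 \<and> 0 < q1 * q2 * q3 - q1\<^sup>2 * q4 - q3\<^sup>2"

lemma hurwitz_quartic_near_zero:
  fixes q1 q2 q3 q4 :: "real \<Rightarrow> real"
  assumes "hurwitz_quartic (q1 0) (q2 0) (q3 0) (q4 0)"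
    and "isCont q1 0" "isCont q2 0" "isCont q3 0" "isCont q4 0"
  obtains \<sigma> where "0 < \<sigma>" "hurwitz_quartic (q1 \<sigma>) (q2 \<sigma>) (q3 \<sigma>) (q4 \<sigma>)"
proof -
  define h where "h \<sigma> = q1 \<sigma> * q2 \<sigma> * q3 \<sigma> - (q1 \<sigma>)\<^sup>2 * q4 \<sigma> - (q3 \<sigma>)\<^sup>2" for \<sigma>
  have right_limit: "(f \<longlongrightarrow> f 0) (at_right 0)" if "isCont f 0" for f :: "real \<Rightarrow> real"
    using that unfolding isCont_def by (rule tendsto_within_subset) auto
  have "isCont h 0"
    unfolding h_def using assms(2-5) by (intro continuous_intros)
  moreover have "0 < q1 0" "0 < q3 0" "0 < q4 0" "0 < h 0"
    using assms(1) by (simp_all add: hurwitz_quartic_def h_def)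
  ultimately have "\<forall>\<^sub>F \<sigma> in at_right 0. 0 < \<sigma> \<and> 0 < q1 \<sigma> \<and> 0 < q3 \<sigma> \<and> 0 < q4 \<sigma> \<and> 0 < h \<sigma>"
    using eventually_at_right_less assms(2-5)
      order_tendstoD(1)[OF right_limit[of q1]] order_tendstoD(1)[OF right_limit[of q3]]
      order_tendstoD(1)[OF right_limit[of q4]] order_tendstoD(1)[OF right_limit[of h]]
    by (simp add: eventually_conj_iff)
  then obtain \<sigma> where "0 < \<sigma> \<and> 0 < q1 \<sigma> \<and> 0 < q3 \<sigma> \<and> 0 < q4 \<sigma> \<and> 0 < h \<sigma>"
    using eventually_happens'[OF trivial_limit_at_right_real] by blast
  then show ?thesis
    using that unfolding hurwitz_quartic_def h_def by blast
qed

lemma hurwitz_quartic_factorization: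
  assumes "hurwitz_quartic q1 q2 q3 q4"
  obtains b2 b3 b4 where "0 < b2" "0 < b3" "0 < b4"
    "q2 = b2 + b3 + b4" "q3 = q1 * (b3 + b4)" "q4 = b2 * b4"
proof -
  have q1: "0 < q1" and q3: "0 < q3" and q4: "0 < q4"
    and hurwitz: "0 < q1 * q2 * q3 - q1\<^sup>2 * q4 - q3\<^sup>2"
    using assms by (auto simp: hurwitz_quartic_def)
  have "q1\<^sup>2 * q4 < q3 * (q1 * q2 - q3)"
    using hurwitz by (simp add: algebra_simps power2_eq_square)
  moreover have "0 < q1\<^sup>2 * q4"
    using q1 q4 by simp
  ultimately have "0 < q3 * (q1 * q2 - q3)"
    by linarith
  with q3 have pos: "0 < q1 * q2 - q3"
    by (simp add: zero_less_mult_iff)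
  define b2 where "b2 = q2 - q3 / q1"
  define b4 where "b4 = q4 / b2"
  define b3 where "b3 = q3 / q1 - b4"
  have b2: "b2 = (q1 * q2 - q3) / q1"
    using q1 by (simp add: b2_def field_simps)
  then have "0 < b2"
    using pos q1 by simp
  moreover have "0 < b4"
    using \<open>0 < b2\<close> q4 by (simp add: b4_def)
  moreover have "b3 = (q1 * q2 * q3 - q1\<^sup>2 * q4 - q3\<^sup>2) / (q1 * (q1 * q2 - q3))"
    using q1 pos by (simp add: b3_def b4_def b2 field_simps power2_eq_square)
  then have "0 < b3"
    using hurwitz q1 pos by simp
  moreover have "q2 = b2 + b3 + b4" "q3 = q1 * (b3 + b4)" "q4 = b2 * b4"
    using q1 \<open>0 < b2\<close> by (simp_all add: b2_def b3_def b4_def)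
  ultimately show ?thesis
    using that by blast
qed

definition quartic_lyapunov_form ::
    "('a::real_inner \<Rightarrow> 'a) \<Rightarrow> real \<Rightarrow> real \<Rightarrow> real \<Rightarrow> 'a \<Rightarrow> 'a \<Rightarrow> real" where
  "quartic_lyapunov_form M b2 b3 b4 y h =
     b2 * b3 * b4 * (y \<bullet> h) + b2 * b3 * (M y \<bullet> M h)
     + b2 * ((M (M y) + b4 *\<^sub>R y) \<bullet> (M (M h) + b4 *\<^sub>R h))
     + (M (M (M y)) + (b3 + b4) *\<^sub>R M y) \<bullet> (M (M (M h)) + (b3 + b4) *\<^sub>R M h)"

lemma quartic_lyapunov_form_commute:
  "quartic_lyapunov_form M b2 b3 b4 y h = quartic_lyapunov_form M b2 b3 b4 h y"
  by (simp add: quartic_lyapunov_form_def inner_commute)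

lemma bilinear_quartic_lyapunov_form:
  assumes "linear M"
  shows "bilinear (quartic_lyapunov_form M b2 b3 b4)"
proof -
  have "linear (quartic_lyapunov_form M b2 b3 b4 y)" for y
    by (rule linearI)
      (simp_all add: quartic_lyapunov_form_def linear_add[OF assms] linear_scale[OF assms]
        inner_simps algebra_simps)
  moreover have "(\<lambda>x. quartic_lyapunov_form M b2 b3 b4 x y) = quartic_lyapunov_form M b2 b3 b4 y"
    for y
    by (rule ext) (rule quartic_lyapunov_form_commute)
  ultimately show ?thesis
    unfolding bilinear_def by simp
qed

lemma quartic_lyapunov_form_lower:
  assumes "0 < b2" "0 < b3" "0 < b4"
  shows "b2 * b3 * b4 * (norm y)\<^sup>2 \<le> quartic_lyapunov_form M b2 b3 b4 y y"
  using assms by (simp add: quartic_lyapunov_form_def power2_norm_eq_inner[symmetric])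

lemma quartic_lyapunov_form_derivative:
  fixes M :: "'a::real_inner \<Rightarrow> 'a"
  assumes char: "M (M (M (M y))) + q1 *\<^sub>R M (M (M y)) + q2 *\<^sub>R M (M y) + q3 *\<^sub>R M y + q4 *\<^sub>R y = 0"
    and "q2 = b2 + b3 + b4" "q3 = q1 * (b3 + b4)" "q4 = b2 * b4"
  shows "quartic_lyapunov_form M b2 b3 b4 y (M y) = - q1 * (norm (M (M (M y)) + (b3 + b4) *\<^sub>R M y))\<^sup>2"
proof -
  have M4: "M (M (M (M y))) = - (q1 *\<^sub>R M (M (M y)) + q2 *\<^sub>R M (M y) + q3 *\<^sub>R M y + q4 *\<^sub>R y)"
    using char by (simp only: eq_neg_iff_add_eq_0 add.assoc)
  show ?thesis
    unfolding quartic_lyapunov_form_def M4 assms(2-4) power2_norm_eq_inner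
    by (simp add: inner_simps inner_commute[of "M y" y] inner_commute[of "M (M y)" y]
        inner_commute[of "M (M (M y))" y] inner_commute[of "M (M y)" "M y"]
        inner_commute[of "M (M (M y))" "M y"] inner_commute[of "M (M (M y))" "M (M y)"])
      algebra
qed

lemma shifted_hurwitz_quartic_lyapunov:
  fixes A M :: "'a::real_inner \<Rightarrow> 'a"
  assumes A: "linear A" and shift: "\<And>y. M y = A y + \<sigma> *\<^sub>R y"
    and hurwitz: "hurwitz_quartic q1 q2 q3 q4"
    and char: "\<And>y. M (M (M (M y))) + q1 *\<^sub>R M (M (M y)) + q2 *\<^sub>R M (M y) + q3 *\<^sub>R M y + q4 *\<^sub>R y = 0"
  obtains B a where "bilinear B" "\<And>y h. B y h = B h y" "0 < a" "\<And>y. a * (norm y)\<^sup>2 \<le> B y y"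
    "\<And>y. B y (A y) \<le> - \<sigma> * B y y"
proof -
  obtain b2 b3 b4 where b: "0 < b2" "0 < b3" "0 < b4"
    and coeffs: "q2 = b2 + b3 + b4" "q3 = q1 * (b3 + b4)" "q4 = b2 * b4"
    using hurwitz_quartic_factorization[OF hurwitz] by blast
  define B where "B = quartic_lyapunov_form M b2 b3 b4"
  have "linear M"
    using A by (intro linearI) (simp_all add: shift linear_add linear_scale algebra_simps)
  then have B: "bilinear B"
    unfolding B_def by (rule bilinear_quartic_lyapunov_form)
  have "B y (A y) \<le> - \<sigma> * B y y" for y
  proof -
    have "A y = M y - \<sigma> *\<^sub>R y"
      by (simp add: shift)
    then have "B y (A y) = B y (M y) - \<sigma> * B y y"
      by (simp add: bilinear_rsub[OF B] bilinear_rmul[OF B])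
    moreover have "B y (M y) \<le> 0"
      using hurwitz unfolding B_def quartic_lyapunov_form_derivative[OF char coeffs]
      by (simp add: hurwitz_quartic_def)
    ultimately show ?thesis
      by simp
  qed
  moreover have "0 < b2 * b3 * b4"
    using b by simp
  ultimately show ?thesis
    using that B quartic_lyapunov_form_commute quartic_lyapunov_form_lower[OF b]
    unfolding B_def by blast
qed

section \<open>The two-gene network\<close>

definition grn_jacobian ::
    "real \<Rightarrow> real \<Rightarrow> real \<Rightarrow> real \<Rightarrow> real \<Rightarrow> real \<Rightarrow> real \<Rightarrow> real \<Rightarrow> real \<Rightarrow> state4 \<Rightarrow> state4" where
  "grn_jacobian ga gb da db ka kb X Y Z =
     (\<lambda>(u1, u2, u3, u4).
        (- ga * u1 + X * u3 + Y * u4, - gb * u2 + Z * u3, ka * u1 - da * u3, kb * u2 - db * u4))"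

lemma grn_field_rational:
  assumes "0 < tha" "0 < thb" "0 < thaa"
  shows "grn_field ma mb ga gb ka kb da db tha thb thaa A1 B1 na nb naa =
    (\<lambda>w. (ma * fst (snd (snd w)) ^ naa * thb ^ nb /
            (fst (snd (snd w)) ^ naa * thb ^ nb + snd (snd (snd w)) ^ nb * thaa ^ naa
              + thb ^ nb * thaa ^ naa)
          - ga * fst w + A1,
          mb * tha ^ na / (fst (snd (snd w)) ^ na + tha ^ na) - gb * fst (snd w) + B1,
          ka * fst w - da * fst (snd (snd w)),
          kb * fst (snd w) - db * snd (snd (snd w))))"
proof -
  have "1 + (p / thaa) ^ naa + (q / thb) ^ nb
      = (p ^ naa * thb ^ nb + q ^ nb * thaa ^ naa + thb ^ nb * thaa ^ naa) / (thaa ^ naa * thb ^ nb)"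
    "1 + (p / tha) ^ na = (p ^ na + tha ^ na) / tha ^ na" for p q :: real
    using assms by (simp_all add: power_divide field_simps)
  then show ?thesis
    using assms by (auto simp: grn_field_def fun_eq_iff power_divide)
qed

lemma grn_field_has_derivative:
  assumes pos: "0 < tha" "0 < thb" "0 < thaa" "0 < pa" "0 < pb"
    and X: "X = ma * real naa * pa ^ (naa - 1) * thb ^ nb * thaa ^ naa * (pb ^ nb + thb ^ nb)
                / (pa ^ naa * thb ^ nb + pb ^ nb * thaa ^ naa + thb ^ nb * thaa ^ naa)\<^sup>2"
    and Y: "Y = - (ma * real nb * pa ^ naa * pb ^ (nb - 1) * thb ^ nb * thaa ^ naa
                / (pa ^ naa * thb ^ nb + pb ^ nb * thaa ^ naa + thb ^ nb * thaa ^ naa)\<^sup>2)"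
    and Z: "Z = - (mb * real na * pa ^ (na - 1) * tha ^ na / (pa ^ na + tha ^ na)\<^sup>2)"
  shows "(grn_field ma mb ga gb ka kb da db tha thb thaa A1 B1 na nb naa
            has_derivative grn_jacobian ga gb da db ka kb X Y Z) (at (ra, rb, pa, pb))"
proof -
  have denominators: "0 < pa ^ naa * thb ^ nb + pb ^ nb * thaa ^ naa + thb ^ nb * thaa ^ naa"
    "0 < pa ^ na + tha ^ na"
    using pos by (auto intro!: add_pos_pos mult_pos_pos)
  show ?thesis
    unfolding grn_field_rational[OF pos(1-3)]
    apply (rule has_derivative_eq_rhs)
     apply (auto intro!: derivative_eq_intros simp: denominators[THEN less_imp_neq, symmetric])[1]
    using denominators
    apply (auto simp: grn_jacobian_def fun_eq_iff X Y Z field_simps power2_eq_square)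
    apply (simp add: add_divide_distrib[symmetric])
    done
qed

lemma grn_jacobian_characteristic:
  fixes ga gb da db ka kb X Y Z :: real and y :: state4
  defines "J \<equiv> grn_jacobian ga gb da db ka kb X Y Z"
  shows "J (J (J (J y))) + (ga + gb + da + db) *\<^sub>R J (J (J y))
    + (ga * gb + (ga + gb) * (da + db) + da * db - ka * X) *\<^sub>R J (J y)
    + (da * db * (ga + gb) + (da + db) * ga * gb - ka * (db + gb) * X) *\<^sub>R J y
    + (ga * gb * da * db - ka * kb * Y * Z - ka * gb * db * X) *\<^sub>R y = 0"
  by (cases y) (simp add: J_def grn_jacobian_def algebra_simps zero_prod_def)

lemma grn_jacobian_shift:
  "grn_jacobian (ga - \<sigma>) (gb - \<sigma>) (da - \<sigma>) (db - \<sigma>) ka kb X Y Z y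
     = grn_jacobian ga gb da db ka kb X Y Z y + \<sigma> *\<^sub>R y"
  by (cases y) (simp add: grn_jacobian_def algebra_simps)

lemma linear_grn_jacobian: "linear (grn_jacobian ga gb da db ka kb X Y Z)"
  by (rule linearI) (auto simp: grn_jacobian_def algebra_simps split: prod.splits)

lemma grn_jacobian_lyapunov:
  assumes "hurwitz_quartic (ga + gb + da + db) (ga * gb + (ga + gb) * (da + db) + da * db - ka * X)
             (da * db * (ga + gb) + (da + db) * ga * gb - ka * (db + gb) * X)
             (ga * gb * da * db - ka * kb * Y * Z - ka * gb * db * X)"
  obtains B a c where "bilinear B" "\<And>y h. B y h = B h y" "0 < a" "\<And>y. a * (norm y)\<^sup>2 \<le> B y y"
    "0 < c" "\<And>y. B y (grn_jacobian ga gb da db ka kb X Y Z y) \<le> - c * B y y"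
proof -
  define J where "J \<sigma> = grn_jacobian (ga - \<sigma>) (gb - \<sigma>) (da - \<sigma>) (db - \<sigma>) ka kb X Y Z" for \<sigma>
  define e1 where "e1 \<sigma> = (ga - \<sigma>) + (gb - \<sigma>) + (da - \<sigma>) + (db - \<sigma>)" for \<sigma>
  define e2 where "e2 \<sigma> = (ga - \<sigma>) * (gb - \<sigma>) + ((ga - \<sigma>) + (gb - \<sigma>)) * ((da - \<sigma>) + (db - \<sigma>))
    + (da - \<sigma>) * (db - \<sigma>) - ka * X" for \<sigma>
  define e3 where "e3 \<sigma> = (da - \<sigma>) * (db - \<sigma>) * ((ga - \<sigma>) + (gb - \<sigma>))
    + ((da - \<sigma>) + (db - \<sigma>)) * (ga - \<sigma>) * (gb - \<sigma>) - ka * ((db - \<sigma>) + (gb - \<sigma>)) * X" for \<sigma>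
  define e4 where "e4 \<sigma> = (ga - \<sigma>) * (gb - \<sigma>) * (da - \<sigma>) * (db - \<sigma>) - ka * kb * Y * Z
    - ka * (gb - \<sigma>) * (db - \<sigma>) * X" for \<sigma>
  have "hurwitz_quartic (e1 0) (e2 0) (e3 0) (e4 0)"
    using assms by (simp add: e1_def e2_def e3_def e4_def)
  then obtain \<sigma> where "0 < \<sigma>" and hurwitz: "hurwitz_quartic (e1 \<sigma>) (e2 \<sigma>) (e3 \<sigma>) (e4 \<sigma>)"
    by (rule hurwitz_quartic_near_zero)
      (auto simp: e1_def e2_def e3_def e4_def intro!: continuous_intros)
  have char: "J (\<sigma>) (J \<sigma> (J \<sigma> (J \<sigma> y))) + e1 \<sigma> *\<^sub>R J \<sigma> (J \<sigma> (J \<sigma> y)) + e2 \<sigma> *\<^sub>R J \<sigma> (J \<sigma> y)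
      + e3 \<sigma> *\<^sub>R J \<sigma> y + e4 \<sigma> *\<^sub>R y = 0" for y
    unfolding J_def e1_def e2_def e3_def e4_def by (rule grn_jacobian_characteristic)
  have shift: "J \<sigma> y = J 0 y + \<sigma> *\<^sub>R y" for y
    unfolding J_def by (simp add: grn_jacobian_shift)
  obtain B a where "bilinear B" "\<And>y h. B y h = B h y" "0 < a" "\<And>y. a * (norm y)\<^sup>2 \<le> B y y"
    "\<And>y. B y (J 0 y) \<le> - \<sigma> * B y y"
    using shifted_hurwitz_quartic_lyapunov[OF _ shift hurwitz char] linear_grn_jacobian
    unfolding J_def by blast
  with \<open>0 < \<sigma>\<close> show ?thesis
    using that unfolding J_def by auto
qed

lemma abs_power_diff_le:
  fixes x y R :: real
  assumes "0 \<le> x" "x \<le> R" "0 \<le> y" "y \<le> R"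
  shows "\<bar>x ^ n - y ^ n\<bar> \<le> real n * R ^ (n - 1) * \<bar>x - y\<bar>"
proof -
  have "(\<Sum>i<n. y ^ (n - Suc i) * x ^ i) \<le> (\<Sum>i<n. R ^ (n - 1))"
  proof (rule sum_mono)
    fix i assume "i \<in> {..<n}"
    then have "y ^ (n - Suc i) * x ^ i \<le> R ^ (n - Suc i) * R ^ i"
      using assms by (intro mult_mono power_mono) auto
    also have "\<dots> = R ^ (n - 1)"
      using \<open>i \<in> {..<n}\<close> by (simp flip: power_add)
    finally show "y ^ (n - Suc i) * x ^ i \<le> R ^ (n - 1)" .
  qed
  moreover have "0 \<le> (\<Sum>i<n. y ^ (n - Suc i) * x ^ i)"
    using assms by (intro sum_nonneg) auto
  ultimately show ?thesis
    by (simp add: power_diff_sumr2 abs_mult mult_left_mono mult.commute)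
qed

lemma abs_activation_diff_le:
  fixes U V U' V' :: real
  assumes "0 \<le> U" "0 \<le> V" "0 \<le> U'" "0 \<le> V'"
  shows "\<bar>U / (1 + U + V) - U' / (1 + U' + V')\<bar> \<le> \<bar>U - U'\<bar> + \<bar>V - V'\<bar>"
proof -
  define D D' E where "D = 1 + U + V" and "D' = 1 + U' + V'" and "E = \<bar>U - U'\<bar> + \<bar>V - V'\<bar>"
  have D: "1 \<le> D" "1 \<le> D'"
    using assms by (simp_all add: D_def D'_def)
  have "\<bar>(U - U') * (1 + V') + U' * (V' - V)\<bar> \<le> (1 + V') * \<bar>U - U'\<bar> + U' * \<bar>V - V'\<bar>"
    using assms by (simp add: abs_mult abs_minus_commute[of V'] order_trans[OF abs_triangle_ineq])
  also have "\<dots> \<le> D' * E"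
    using assms by (simp add: D'_def E_def distrib_left add_mono mult_right_mono)
  finally have numerator: "\<bar>(U - U') * (1 + V') + U' * (V' - V)\<bar> \<le> D' * E" .
  have "U / D - U' / D' = ((U - U') * (1 + V') + U' * (V' - V)) / (D * D')"
    using D by (simp add: D_def D'_def field_simps)
  then have "\<bar>U / D - U' / D'\<bar> = \<bar>(U - U') * (1 + V') + U' * (V' - V)\<bar> / (D * D')"
    using D by (simp add: abs_divide)
  also have "\<dots> \<le> D' * E / (D * D')"
    using D by (intro divide_right_mono numerator) simp
  also have "\<dots> = E / D"
    using D by simp
  also have "\<dots> \<le> E"
    using D by (simp add: E_def divide_le_eq mult_le_cancel_left1)
  finally show ?thesis
    by (simp add: D_def D'_def E_def)
qed

lemma abs_repression_diff_le:
  fixes W W' :: real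
  assumes "0 \<le> W" "0 \<le> W'"
  shows "\<bar>1 / (1 + W) - 1 / (1 + W')\<bar> \<le> \<bar>W - W'\<bar>"
proof -
  have "1 \<le> (1 + W) * (1 + W')"
    using assms by (simp add: algebra_simps)
  moreover have "1 / (1 + W) - 1 / (1 + W') = (W' - W) / ((1 + W) * (1 + W'))"
    using assms by (simp add: field_simps)
  ultimately show ?thesis
    by (simp add: abs_divide abs_minus_commute divide_le_eq mult_le_cancel_left1)
qed

lemma abs_components_le_dist:
  fixes u v :: state4
  shows "\<bar>fst u - fst v\<bar> \<le> dist u v" "\<bar>fst (snd u) - fst (snd v)\<bar> \<le> dist u v"
    "\<bar>fst (snd (snd u)) - fst (snd (snd v))\<bar> \<le> dist u v"
    "\<bar>snd (snd (snd u)) - snd (snd (snd v))\<bar> \<le> dist u v"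
  unfolding dist_real_def[symmetric]
  by (rule dist_fst_le order_trans[OF dist_fst_le dist_snd_le]
      order_trans[OF dist_fst_le order_trans[OF dist_snd_le dist_snd_le]]
      order_trans[OF dist_snd_le order_trans[OF dist_snd_le dist_snd_le]])+

lemma norm_state4_le: "norm ((a, b, c, d) :: state4) \<le> \<bar>a\<bar> + \<bar>b\<bar> + \<bar>c\<bar> + \<bar>d\<bar>"
  using norm_Pair_le[of a "(b, c, d)"] norm_Pair_le[of b "(c, d)"] norm_Pair_le[of c d] by simp

lemma grn_field_lipschitz_on_box:
  assumes pos: "0 < ma" "0 < mb" "0 < ga" "0 < gb" "0 < ka" "0 < kb" "0 < da" "0 < db"
      "0 < tha" "0 < thb" "0 < thaa" and R: "0 \<le> R"
  obtains L where "L-lipschitz_on (UNIV \<times> UNIV \<times> {0..R} \<times> {0..R})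
    (grn_field ma mb ga gb ka kb da db tha thb thaa A1 B1 na nb naa)"
proof -
  define K :: "nat \<Rightarrow> real \<Rightarrow> real" where "K n \<theta> = real n * (R / \<theta>) ^ (n - 1) / \<theta>" for n \<theta>
  have K: "0 \<le> K n \<theta>" if "0 < \<theta>" for n \<theta>
    using that R by (simp add: K_def)
  have power: "\<bar>(x / \<theta>) ^ n - (y / \<theta>) ^ n\<bar> \<le> K n \<theta> * \<bar>x - y\<bar>"
    if "0 < \<theta>" "x \<in> {0..R}" "y \<in> {0..R}" for x y \<theta> n
  proof -
    have "\<bar>(x / \<theta>) ^ n - (y / \<theta>) ^ n\<bar> \<le> real n * (R / \<theta>) ^ (n - 1) * \<bar>x / \<theta> - y / \<theta>\<bar>"
      using that by (intro abs_power_diff_le) (auto intro: divide_right_mono)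
    then show ?thesis
      using that by (simp add: K_def flip: diff_divide_distrib)
  qed
  define act where "act p q = (p / thaa) ^ naa / (1 + (p / thaa) ^ naa + (q / thb) ^ nb)" for p q
  define rep where "rep p = 1 / (1 + (p / tha) ^ na)" for p
  define L where "L = ma * (K naa thaa + K nb thb) + ga + mb * K na tha + gb + ka + da + kb + db"
  have "L-lipschitz_on (UNIV \<times> UNIV \<times> {0..R} \<times> {0..R})
    (grn_field ma mb ga gb ka kb da db tha thb thaa A1 B1 na nb naa)"
  proof (rule lipschitz_onI)
    show "0 \<le> L"
      using pos K by (simp add: L_def add_nonneg_nonneg)
    fix u v :: state4
    assume "u \<in> UNIV \<times> UNIV \<times> {0..R} \<times> {0..R}" "v \<in> UNIV \<times> UNIV \<times> {0..R} \<times> {0..R}"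
    then obtain r1 r2 p q r1' r2' p' q'
      where u: "u = (r1, r2, p, q)" and v: "v = (r1', r2', p', q')"
      and box: "p \<in> {0..R}" "q \<in> {0..R}" "p' \<in> {0..R}" "q' \<in> {0..R}"
      by auto
    define d where "d = dist u v"
    have diffs: "\<bar>r1 - r1'\<bar> \<le> d" "\<bar>r2 - r2'\<bar> \<le> d" "\<bar>p - p'\<bar> \<le> d" "\<bar>q - q'\<bar> \<le> d"
      using abs_components_le_dist[of u v] by (simp_all add: u v d_def)
    have "\<bar>act p q - act p' q'\<bar>
        \<le> \<bar>(p / thaa) ^ naa - (p' / thaa) ^ naa\<bar> + \<bar>(q / thb) ^ nb - (q' / thb) ^ nb\<bar>"
      unfolding act_def using box pos by (intro abs_activation_diff_le) auto
    also have "\<dots> \<le> K naa thaa * d + K nb thb * d"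
      using box pos diffs K
      by (intro add_mono order_trans[OF power] mult_left_mono) auto
    finally have act: "\<bar>act p q - act p' q'\<bar> \<le> (K naa thaa + K nb thb) * d"
      by (simp add: distrib_right)
    have "\<bar>rep p - rep p'\<bar> \<le> \<bar>(p / tha) ^ na - (p' / tha) ^ na\<bar>"
      unfolding rep_def using box pos by (intro abs_repression_diff_le) auto
    also have "\<dots> \<le> K na tha * d"
      using box pos diffs K by (intro order_trans[OF power] mult_left_mono) auto
    finally have rep: "\<bar>rep p - rep p'\<bar> \<le> K na tha * d" .
    have "grn_field ma mb ga gb ka kb da db tha thb thaa A1 B1 na nb naa u
        - grn_field ma mb ga gb ka kb da db tha thb thaa A1 B1 na nb naa v
      = (ma * (act p q - act p' q') - ga * (r1 - r1'), mb * (rep p - rep p') - gb * (r2 - r2'),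
         ka * (r1 - r1') - da * (p - p'), kb * (r2 - r2') - db * (q - q'))"
      by (simp add: u v grn_field_def act_def rep_def algebra_simps)
    also have "norm \<dots> \<le> (ma * ((K naa thaa + K nb thb) * d) + ga * d)
        + (mb * (K na tha * d) + gb * d) + (ka * d + da * d) + (kb * d + db * d)"
      using pos act rep diffs
      by (intro order_trans[OF norm_state4_le] add_mono order_trans[OF abs_triangle_ineq4])
        (auto simp: abs_mult intro!: mult_left_mono)
    also have "\<dots> = L * d"
      by (simp add: L_def algebra_simps)
    finally show "dist (grn_field ma mb ga gb ka kb da db tha thb thaa A1 B1 na nb naa u)
        (grn_field ma mb ga gb ka kb da db tha thb thaa A1 B1 na nb naa v) \<le> L * dist u v"
      by (simp add: dist_norm d_def)
  qed
  then show ?thesis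
    by (rule that)
qed

lemma grn_field_lipschitz_near_steady_state:
  assumes pos: "0 < ma" "0 < mb" "0 < ga" "0 < gb" "0 < ka" "0 < kb" "0 < da" "0 < db"
      "0 < tha" "0 < thb" "0 < thaa" and ppos: "0 < pa" "0 < pb"
  obtains L where "L-lipschitz_on (cball (ra, rb, pa, pb) (min pa pb))
    (grn_field ma mb ga gb ka kb da db tha thb thaa A1 B1 na nb naa)"
proof -
  have "cball (ra, rb, pa, pb) (min pa pb) \<subseteq> UNIV \<times> UNIV \<times> {0..2 * (pa + pb)} \<times> {0..2 * (pa + pb)}"
  proof
    fix z :: state4 assume "z \<in> cball (ra, rb, pa, pb) (min pa pb)"
    then have "\<bar>fst (snd (snd z)) - pa\<bar> \<le> min pa pb" "\<bar>snd (snd (snd z)) - pb\<bar> \<le> min pa pb"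
      using abs_components_le_dist(3,4)[of z "(ra, rb, pa, pb)"] by (auto simp: dist_commute)
    then show "z \<in> UNIV \<times> UNIV \<times> {0..2 * (pa + pb)} \<times> {0..2 * (pa + pb)}"
      using ppos by (cases z) auto
  qed
  moreover obtain L where "L-lipschitz_on (UNIV \<times> UNIV \<times> {0..2 * (pa + pb)} \<times> {0..2 * (pa + pb)})
      (grn_field ma mb ga gb ka kb da db tha thb thaa A1 B1 na nb naa)"
    by (rule grn_field_lipschitz_on_box[OF pos, where R = "2 * (pa + pb)"]) (use ppos in auto)
  ultimately show ?thesis
    using that lipschitz_on_subset by blast
qed

lemma grn_field_exponentially_stable:
  assumes pos: "0 < ma" "0 < mb" "0 < ga" "0 < gb" "0 < ka" "0 < kb" "0 < da" "0 < db"
      "0 < tha" "0 < thb" "0 < thaa" and ppos: "0 < pa" "0 < pb"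
    and equilibrium:
      "grn_field ma mb ga gb ka kb da db tha thb thaa A1 B1 na nb naa (ra, rb, pa, pb) = 0"
    and X: "X = ma * real naa * pa ^ (naa - 1) * thb ^ nb * thaa ^ naa * (pb ^ nb + thb ^ nb)
                / (pa ^ naa * thb ^ nb + pb ^ nb * thaa ^ naa + thb ^ nb * thaa ^ naa)\<^sup>2"
    and Y: "Y = - (ma * real nb * pa ^ naa * pb ^ (nb - 1) * thb ^ nb * thaa ^ naa
                / (pa ^ naa * thb ^ nb + pb ^ nb * thaa ^ naa + thb ^ nb * thaa ^ naa)\<^sup>2)"
    and Z: "Z = - (mb * real na * pa ^ (na - 1) * tha ^ na / (pa ^ na + tha ^ na)\<^sup>2)"
    and hurwitz: "hurwitz_quartic (ga + gb + da + db)
      (ga * gb + (ga + gb) * (da + db) + da * db - ka * X)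
      (da * db * (ga + gb) + (da + db) * ga * gb - ka * (db + gb) * X)
      (ga * gb * da * db - ka * kb * Y * Z - ka * gb * db * X)"
  shows "exponentially_stable (grn_field ma mb ga gb ka kb da db tha thb thaa A1 B1 na nb naa)
    (ra, rb, pa, pb)"
proof -
  obtain B a c where B: "bilinear B" "\<And>y h. B y h = B h y"
    and lower: "0 < a" "\<And>y. a * (norm y)\<^sup>2 \<le> B y y"
    and decrease: "0 < c" "\<And>y. B y (grn_jacobian ga gb da db ka kb X Y Z y) \<le> - c * B y y"
    using grn_jacobian_lyapunov[OF hurwitz] by blast
  obtain L where lipschitz: "L-lipschitz_on (cball (ra, rb, pa, pb) (min pa pb))
      (grn_field ma mb ga gb ka kb da db tha thb thaa A1 B1 na nb naa)"
    using grn_field_lipschitz_near_steady_state[OF pos ppos] .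
  show ?thesis
    using ppos by (intro linearized_exponential_stability[OF equilibrium
        grn_field_has_derivative[OF pos(9-11) ppos X Y Z] _ lipschitz B lower decrease]) simp
qed

theorem theorem1:
  fixes ma mb ga gb ka kb da db tha thb thaa A1 B1 :: real
    and na nb naa :: nat
    and ra rb pa pb :: real
  assumes pos: "ma > 0" "mb > 0" "ga > 0" "gb > 0" "ka > 0" "kb > 0" "da > 0" "db > 0"
      "tha > 0" "thb > 0" "thaa > 0"
    and nonneg: "A1 \<ge> 0" "B1 \<ge> 0"
    and npos: "na \<ge> 1" "nb \<ge> 1" "naa \<ge> 1"
    and steady: "grn_field ma mb ga gb ka kb da db tha thb thaa A1 B1 na nb naa (ra, rb, pa, pb)
                   = (0, 0, 0, 0)"
    and ppos: "pa > 0" "pb > 0"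
  assumes crit: "let
      D = pa ^ naa * thb ^ nb + pb ^ nb * thaa ^ naa + thb ^ nb * thaa ^ naa;
      X = ma * real naa * pa ^ (naa - 1) * thb ^ nb * thaa ^ naa * (pb ^ nb + thb ^ nb) / D ^ 2;
      Y = - (ma * real nb * pa ^ naa * pb ^ (nb - 1) * thb ^ nb * thaa ^ naa / D ^ 2);
      Z = - (mb * real na * pa ^ (na - 1) * tha ^ na / (pa ^ na + tha ^ na) ^ 2);
      e1 = ga + gb + da + db;
      e2 = ga * gb + (ga + gb) * (da + db) + da * db - ka * X;
      e3 = da * db * (ga + gb) + (da + db) * ga * gb - ka * (db + gb) * X;
      e4 = ga * gb * da * db - ka * kb * Y * Z - ka * gb * db * X
    in e1 > 0 \<and> e3 > 0 \<and> e4 > 0 \<and> e1 * e2 * e3 - e1 ^ 2 * e4 - e3 ^ 2 > 0"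
  shows "locally_asymptotically_stable
           (grn_field ma mb ga gb ka kb da db tha thb thaa A1 B1 na nb naa) (ra, rb, pa, pb)"
proof -
  define X where "X = ma * real naa * pa ^ (naa - 1) * thb ^ nb * thaa ^ naa * (pb ^ nb + thb ^ nb)
    / (pa ^ naa * thb ^ nb + pb ^ nb * thaa ^ naa + thb ^ nb * thaa ^ naa) ^ 2"
  define Y where "Y = - (ma * real nb * pa ^ naa * pb ^ (nb - 1) * thb ^ nb * thaa ^ naa
    / (pa ^ naa * thb ^ nb + pb ^ nb * thaa ^ naa + thb ^ nb * thaa ^ naa) ^ 2)"
  define Z where "Z = - (mb * real na * pa ^ (na - 1) * tha ^ na / (pa ^ na + tha ^ na) ^ 2)"
  have hurwitz: "hurwitz_quartic (ga + gb + da + db)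
      (ga * gb + (ga + gb) * (da + db) + da * db - ka * X)
      (da * db * (ga + gb) + (da + db) * ga * gb - ka * (db + gb) * X)
      (ga * gb * da * db - ka * kb * Y * Z - ka * gb * db * X)"
    using crit unfolding Let_def X_def[symmetric] Y_def[symmetric] Z_def[symmetric]
    by (simp only: hurwitz_quartic_def)
  have "grn_field ma mb ga gb ka kb da db tha thb thaa A1 B1 na nb naa (ra, rb, pa, pb) = 0"
    using steady by (simp add: zero_prod_def)
  then have "exponentially_stable (grn_field ma mb ga gb ka kb da db tha thb thaa A1 B1 na nb naa)
      (ra, rb, pa, pb)"
    using grn_field_exponentially_stable[OF pos ppos _ X_def Y_def Z_def hurwitz] by blast
  then show ?thesis
    by (rule exponentially_stable_imp_locally_asymptotically_stable)
qed

end
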